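(* Let $\mathcal{G}=(\mathcal{V},\mathcal{E})$ be connected, $c\in\mathbb{R}^n$, $\bar c=\frac1n\sum_ic_i$, $R_0=\tfrac12\|c-\bar c\mathbf{1}\|^2$, and let $\{\lambda^t\}_{t\ge0}$ be positive stepsizes. Set $x^0=c$ and for $t\ge0$ choose $e=(i,j)\in\mathcal{E}$ uniformly at random (independently across iterations); if $x_i^t<x_j^t$ set $x_i^{t+1}=x_i^t+\lambda^t$, $x_j^{t+1}=x_j^t-\lambda^t$; otherwise set $x_i^{t+1}=x_i^t-\lambda^t$, $x_j^{t+1}=x_j^t+\lambda^t$; all other coordinates are unchanged. Let $L^t=\frac1m\sum_{(i,j)\in\mathcal{E}}|x_i^t-x_j^t|$, $\alpha^k=\sum_{t=0}^k\lambda^t$, $\beta^k=\sum_{t=0}^k(\lambda^t)^2$. Then for all $k\ge1$ $$\min_{t=0,\dots,k}\mathbb{E}[L^t]\le\sum_{t=0}^k\frac{\lambda^t}{\alpha^k}\mathbb{E}[L^t]\le U^k:=\frac{R_0}{\alpha^k}+\frac{\beta^k}{\alpha^k}.$$ Moreover: (i) if $\lambda^t=\lambda^0>0$ for all $t$, then $U^k=\frac{R_0}{\lambda^0(k+1)}+\lambda^0$; (ii) for fixed $k$ and any $R>0$, over all positive $(\lambda^0,\dots,\lambda^k)$ the quantity $\frac{R+\beta^k}{\alpha^k}$ is minimized by $\lambda^t=\sqrt{R/(k+1)}$ for all $t\le k$, with minimum value $2\sqrt{R/(k+1)}$; in particular if $R\ge R_0$ this choice gives $U^k\le2\sqrt{R/(k+1)}$;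 (iii) if $\lambda^t=a/\sqrt{t+1}$ with $a>0$, then $$U^k\le\frac{R_0+a^2(\log(k+3/2)+\log 2)}{2a(\sqrt{k+2}-1)}.$$
   Context: $\mathcal{G}$ is an undirected graph with vertices $\mathcal{V}=\{1,\dots,n\}$ and $m=|\mathcal{E}|$ edges, each edge $e=(i,j)$ having an arbitrary but fixed orientation; $\mathbf{1}$ is the all-ones vector in $\mathbb{R}^n$ and $\|\cdot\|$ the Euclidean norm. *)

theory Defs
  imports Complex_Main
begin

type_synonym vec = "nat \<Rightarrow> real"
type_synonym edge = "nat \<times> nat"

text \<open>Graph on vertices {0..<n}; each undirected edge appears once, with a fixed orientation (i,j).\<close>
definition simple_graph :: "nat \<Rightarrow> edge list \<Rightarrow> bool" where
  "simple_graph n E \<longleftrightarrow> distinct E \<and>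
     (\<forall>(i,j)\<in>set E. i < n \<and> j < n \<and> i \<noteq> j \<and> (j,i) \<notin> set E)"

definition connected_graph :: "nat \<Rightarrow> edge list \<Rightarrow> bool" where
  "connected_graph n E \<longleftrightarrow>
     (\<forall>u<n. \<forall>v<n. (u, v) \<in> (set E \<union> (set E)\<inverse>)\<^sup>*)"

definition step :: "real \<Rightarrow> edge \<Rightarrow> vec \<Rightarrow> vec" where
  "step l e x = (case e of (i,j) \<Rightarrow>
     if x i < x j then x(i := x i + l, j := x j - l)
     else x(i := x i - l, j := x j + l))"

fun run :: "(nat \<Rightarrow> real) \<Rightarrow> vec \<Rightarrow> nat \<Rightarrow> edge list \<Rightarrow> vec" where
  "run lam x t [] = x"
| "run lam x t (e # es) = run lam (step (lam t) e x) (Suc t) es"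

definition iterate :: "(nat \<Rightarrow> real) \<Rightarrow> vec \<Rightarrow> edge list \<Rightarrow> vec" where
  "iterate lam c s = run lam c 0 s"

definition Lfun :: "edge list \<Rightarrow> vec \<Rightarrow> real" where
  "Lfun E x = (\<Sum>(i,j)\<leftarrow>E. \<bar>x i - x j\<bar>) / real (length E)"

text \<open>All possible edge sample sequences of length t; each has probability (1/m)^t
  under independent uniform edge choice.\<close>
definition seqs :: "edge list \<Rightarrow> nat \<Rightarrow> edge list set" where
  "seqs E t = {s. set s \<subseteq> set E \<and> length s = t}"

definition EL :: "edge list \<Rightarrow> (nat \<Rightarrow> real) \<Rightarrow> vec \<Rightarrow> nat \<Rightarrow> real" where
  "EL E lam c t = (\<Sum>s\<in>seqs E t. Lfun E (iterate lam c s)) / real (length E) ^ t"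

definition cbar :: "nat \<Rightarrow> vec \<Rightarrow> real" where
  "cbar n c = (\<Sum>i<n. c i) / real n"

definition R0 :: "nat \<Rightarrow> vec \<Rightarrow> real" where
  "R0 n c = (1/2) * (\<Sum>i<n. (c i - cbar n c)^2)"

definition alpha :: "(nat \<Rightarrow> real) \<Rightarrow> nat \<Rightarrow> real" where
  "alpha lam k = (\<Sum>t=0..k. lam t)"

definition beta :: "(nat \<Rightarrow> real) \<Rightarrow> nat \<Rightarrow> real" where
  "beta lam k = (\<Sum>t=0..k. (lam t)^2)"

definition Ubound :: "real \<Rightarrow> (nat \<Rightarrow> real) \<Rightarrow> nat \<Rightarrow> real" where
  "Ubound R lam k = R / alpha lam k + beta lam k / alpha lam k"

end

theory Submission
  imports Defs
begin

text \<open>Let V(x) = 1/2 * sum_i (x_i - m)^2 for a fixed centre m (the paper takes m = mean c, so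
  V(x^0) = R0). A step along edge (i,j) moves the amount lambda from the larger to the smaller
  coordinate, which changes V by exactly -lambda |x_i - x_j| + lambda^2. Averaging over the uniformly
  chosen edge gives E V(x^(t+1)) = E V(x^t) - lambda^t E L^t + (lambda^t)^2; telescoping and V >= 0
  yield sum_t lambda^t E L^t <= R0 + beta^k, and dividing by alpha^k gives the bound U^k.
  The stepsize statements are elementary: 2 q alpha^k <= beta^k + (k+1) q^2 is
  sum_t (lambda^t - q)^2 >= 0, and for lambda^t = a / sqrt (t+1) the sums alpha^k and beta^k are
  compared termwise with 2 (sqrt (t+2) - sqrt (t+1)) and ln (t+3/2) - ln (t+1/2).\<close>

definition sq_dev :: "nat \<Rightarrow> real \<Rightarrow> vec \<Rightarrow> real" where
  "sq_dev n m x = (1/2) * (\<Sum>i<n. (x i - m)^2)"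

lemma sq_dev_nonneg: "sq_dev n m x \<ge> 0"
  unfolding sq_dev_def by (simp add: sum_nonneg)

lemma sum_fun_upd:
  fixes g :: "'a \<Rightarrow> 'b::ab_group_add"
  assumes "finite A" "i \<in> A"
  shows "(\<Sum>k\<in>A. g ((x(i := a)) k)) = (\<Sum>k\<in>A. g (x k)) - g (x i) + g a"
proof -
  have "(\<Sum>k\<in>A - {i}. g ((x(i := a)) k)) = (\<Sum>k\<in>A - {i}. g (x k))"
    by (rule sum.cong) auto
  then show ?thesis
    using sum.remove[OF assms, of "\<lambda>k. g ((x(i := a)) k)"] sum.remove[OF assms, of "\<lambda>k. g (x k)"]
    by simp
qed

lemma sq_dev_transfer:
  assumes "i < n" "j < n" "i \<noteq> j"
  shows "sq_dev n m (x(i := x i + d, j := x j - d)) = sq_dev n m x + d * (x i - x j) + d^2"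
proof -
  let ?g = "\<lambda>y. (y - m)^2"
  have "(\<Sum>k<n. ?g ((x(i := x i + d, j := x j - d)) k))
      = (\<Sum>k<n. ?g (x k)) - ?g (x i) + ?g (x i + d) - ?g (x j) + ?g (x j - d)"
    using sum_fun_upd[of "{..<n}" j ?g "x(i := x i + d)"] sum_fun_upd[of "{..<n}" i ?g x] assms
    by simp
  then show ?thesis
    unfolding sq_dev_def by (simp add: power2_eq_square algebra_simps)
qed

lemma sq_dev_step:
  assumes "i < n" "j < n" "i \<noteq> j"
  shows "sq_dev n m (step l (i, j) x) = sq_dev n m x - l * \<bar>x i - x j\<bar> + l^2"
proof (cases "x i < x j")
  case True
  then show ?thesis
    using sq_dev_transfer[OF assms, of m x l] by (simp add: step_def algebra_simps)
next
  case False
  then show ?thesis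
    using sq_dev_transfer[OF assms, of m x "- l"] by (simp add: step_def)
qed

lemma iterate_snoc: "iterate lam c (s @ [e]) = step (lam (length s)) e (iterate lam c s)"
proof -
  have "run lam x t (s @ [e]) = step (lam (t + length s)) e (run lam x t s)" for x t
    by (induction s arbitrary: x t) auto
  then show ?thesis unfolding iterate_def by simp
qed

lemma seqs_Suc: "seqs E (Suc t) = (\<lambda>(s, e). s @ [e]) ` (seqs E t \<times> set E)"
proof (intro equalityI subsetI)
  fix s assume s: "s \<in> seqs E (Suc t)"
  then have "s \<noteq> []"
    unfolding seqs_def by auto
  then obtain s' e where "s = s' @ [e]"
    using rev_exhaust by blast
  with s show "s \<in> (\<lambda>(s, e). s @ [e]) ` (seqs E t \<times> set E)"
    unfolding seqs_def by (auto intro!: image_eqI[of _ _ "(s', e)"])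
qed (auto simp: seqs_def)

lemma sum_seqs_Suc:
  "(\<Sum>s\<in>seqs E (Suc t). f s) = (\<Sum>s\<in>seqs E t. \<Sum>e\<in>set E. f (s @ [e]))"
proof -
  have "inj_on (\<lambda>(s, e). s @ [e]) (seqs E t \<times> set E)"
    by (auto simp: inj_on_def)
  then show ?thesis
    unfolding seqs_Suc by (simp add: sum.reindex sum.cartesian_product prod.case_distrib)
qed

lemma card_seqs: "distinct E \<Longrightarrow> card (seqs E t) = length E ^ t"
  unfolding seqs_def by (simp add: card_lists_length_eq distinct_card)

definition expected :: "edge list \<Rightarrow> (nat \<Rightarrow> real) \<Rightarrow> vec \<Rightarrow> (vec \<Rightarrow> real) \<Rightarrow> nat \<Rightarrow> real" where
  "expected E lam c f t = (\<Sum>s\<in>seqs E t. f (iterate lam c s)) / real (length E) ^ t"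

lemma EL_eq_expected: "EL E lam c t = expected E lam c (Lfun E) t"
  unfolding EL_def expected_def ..

lemma expected_0: "expected E lam c f 0 = f c"
proof -
  have "seqs E 0 = {[]}" unfolding seqs_def by auto
  then show ?thesis unfolding expected_def iterate_def by simp
qed

lemma expected_nonneg: "(\<And>x. f x \<ge> 0) \<Longrightarrow> expected E lam c f t \<ge> 0"
  unfolding expected_def by (simp add: sum_nonneg)

lemma expected_Suc:
  assumes "distinct E" "E \<noteq> []"
  shows "expected E lam c f (Suc t)
    = expected E lam c (\<lambda>x. (\<Sum>e\<leftarrow>E. f (step (lam t) e x)) / real (length E)) t"
proof -
  let ?m = "real (length E)"
  have "(\<Sum>s\<in>seqs E (Suc t). f (iterate lam c s))
      = (\<Sum>s\<in>seqs E t. \<Sum>e\<leftarrow>E. f (step (lam t) e (iterate lam c s)))"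
    unfolding sum_seqs_Suc iterate_snoc
    by (intro sum.cong) (auto simp: seqs_def sum_list_distinct_conv_sum_set[OF assms(1)])
  also have "\<dots> = ?m * (\<Sum>s\<in>seqs E t. (\<Sum>e\<leftarrow>E. f (step (lam t) e (iterate lam c s))) / ?m)"
    using assms(2) by (simp add: sum_distrib_left)
  finally show ?thesis
    unfolding expected_def using assms(2) by simp
qed

lemma expected_affine:
  assumes "distinct E" "E \<noteq> []"
  shows "expected E lam c (\<lambda>x. f x - a * g x + b) t
    = expected E lam c f t - a * expected E lam c g t + b"
proof -
  have "real (card (seqs E t)) = real (length E) ^ t"
    using card_seqs[OF assms(1)] by simp
  moreover have "real (length E) ^ t \<noteq> 0"
    using assms(2) by simp
  ultimately show ?thesis
    unfolding expected_def
    by (simp add: sum.distrib sum_subtractf sum_distrib_left diff_divide_distrib add_divide_distrib)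
qed

lemma mean_sq_dev_step:
  assumes "simple_graph n E" "E \<noteq> []"
  shows "(\<Sum>e\<leftarrow>E. sq_dev n m (step l e x)) / real (length E)
    = sq_dev n m x - l * Lfun E x + l^2"
proof -
  have "(\<Sum>e\<leftarrow>E. sq_dev n m (step l e x))
      = (\<Sum>e\<leftarrow>E. sq_dev n m x - l * (case e of (i, j) \<Rightarrow> \<bar>x i - x j\<bar>) + l^2)"
  proof (intro arg_cong[where f = sum_list] map_cong refl)
    fix e assume "e \<in> set E"
    with assms(1) obtain i j where "e = (i, j)" "i < n" "j < n" "i \<noteq> j"
      unfolding simple_graph_def by fastforce
    then show "sq_dev n m (step l e x) = sq_dev n m x - l * (case e of (i, j) \<Rightarrow> \<bar>x i - x j\<bar>) + l^2"
      using sq_dev_step by simp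
  qed
  also have "\<dots> = real (length E) * (sq_dev n m x + l^2) - l * (\<Sum>(i, j)\<leftarrow>E. \<bar>x i - x j\<bar>)"
    by (simp add: sum_list_addf sum_list_subtractf sum_list_const_mult sum_list_triv algebra_simps)
  finally show ?thesis
    unfolding Lfun_def using assms(2) by (simp add: field_simps)
qed

lemma expected_sq_dev_Suc:
  assumes "simple_graph n E" "E \<noteq> []"
  shows "expected E lam c (sq_dev n m) (Suc t)
    = expected E lam c (sq_dev n m) t - lam t * EL E lam c t + (lam t)^2"
proof -
  have "distinct E" using assms(1) unfolding simple_graph_def by simp
  have "expected E lam c (sq_dev n m) (Suc t)
      = expected E lam c (\<lambda>x. sq_dev n m x - lam t * Lfun E x + (lam t)^2) t"
    by (simp only: expected_Suc[OF \<open>distinct E\<close> assms(2)] mean_sq_dev_step[OF assms])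
  also have "\<dots> = expected E lam c (sq_dev n m) t - lam t * EL E lam c t + (lam t)^2"
    by (simp only: expected_affine[OF \<open>distinct E\<close> assms(2)] EL_eq_expected)
  finally show ?thesis .
qed

lemma expected_sq_dev_telescope:
  assumes "simple_graph n E" "E \<noteq> []"
  shows "expected E lam c (sq_dev n m) (Suc k)
    = sq_dev n m c - (\<Sum>t=0..k. lam t * EL E lam c t) + beta lam k"
  by (induction k) (simp_all add: expected_sq_dev_Suc[OF assms] expected_0 beta_def)

lemma weighted_sum_EL_le:
  assumes "simple_graph n E" "E \<noteq> []"
  shows "(\<Sum>t=0..k. lam t * EL E lam c t) \<le> sq_dev n m c + beta lam k"
  using expected_sq_dev_telescope[OF assms, of lam c m k]
    expected_nonneg[of "sq_dev n m" E lam c "Suc k", OF sq_dev_nonneg] by simp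

lemma R0_eq_sq_dev: "R0 n c = sq_dev n (cbar n c) c"
  unfolding R0_def sq_dev_def ..

lemma R0_nonneg: "R0 n c \<ge> 0"
  unfolding R0_eq_sq_dev by (rule sq_dev_nonneg)

lemma Min_le_convex_combination:
  fixes f w :: "'a \<Rightarrow> real"
  assumes "finite A" "\<And>t. t \<in> A \<Longrightarrow> w t \<ge> 0" "(\<Sum>t\<in>A. w t) = 1"
  shows "Min (f ` A) \<le> (\<Sum>t\<in>A. w t * f t)"
proof -
  have "Min (f ` A) = (\<Sum>t\<in>A. w t * Min (f ` A))"
    using assms(3) by (simp flip: sum_distrib_right)
  also have "\<dots> \<le> (\<Sum>t\<in>A. w t * f t)"
    using assms(1,2) by (intro sum_mono mult_left_mono) auto
  finally show ?thesis .
qed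

lemma alpha_pos: "(\<And>t. t \<le> k \<Longrightarrow> lam t > 0) \<Longrightarrow> alpha lam k > 0"
  unfolding alpha_def by (intro sum_pos) auto

lemma Ubound_eq: "Ubound R lam k = (R + beta lam k) / alpha lam k"
  unfolding Ubound_def by (simp add: add_divide_distrib)

lemma weighted_average_EL_le_Ubound:
  assumes "simple_graph n E" "E \<noteq> []" "\<And>t. t \<le> k \<Longrightarrow> lam t > 0"
  shows "(\<Sum>t=0..k. lam t / alpha lam k * EL E lam c t) \<le> Ubound (R0 n c) lam k"
proof -
  have "(\<Sum>t=0..k. lam t / alpha lam k * EL E lam c t) = (\<Sum>t=0..k. lam t * EL E lam c t) / alpha lam k"
    by (simp add: sum_divide_distrib)
  also have "\<dots> \<le> (R0 n c + beta lam k) / alpha lam k"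
    unfolding R0_eq_sq_dev
    using weighted_sum_EL_le[OF assms(1,2)] alpha_pos[of k lam] assms(3)
    by (simp add: divide_right_mono)
  finally show ?thesis
    by (simp add: Ubound_eq)
qed

lemma Ubound_constant_stepsize:
  assumes "\<forall>t. lam t = lam 0" "lam 0 > 0"
  shows "Ubound R lam k = R / (lam 0 * real (k + 1)) + lam 0"
proof -
  have "lam = (\<lambda>_. lam 0)"
    using assms(1) by auto
  then have "Ubound R lam k = Ubound R (\<lambda>_. lam 0) k"
    by (rule arg_cong[where f = "\<lambda>l. Ubound R l k"])
  then show ?thesis
    using assms(2) by (simp add: Ubound_def alpha_def beta_def power2_eq_square)
qed

lemma two_mul_alpha_le: "2 * q * alpha \<mu> k \<le> beta \<mu> k + real (k + 1) * q^2"
proof -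
  have "0 \<le> (\<Sum>t=0..k. (\<mu> t - q)^2)"
    by (simp add: sum_nonneg)
  also have "\<dots> = beta \<mu> k - 2 * q * alpha \<mu> k + real (k + 1) * q^2"
    unfolding alpha_def beta_def power2_diff
    by (simp add: sum.distrib sum_subtractf sum_distrib_left algebra_simps)
  finally show ?thesis by simp
qed

lemma constant_stepsize_value:
  fixes R :: real and k :: nat
  assumes "R \<ge> 0"
  defines "q \<equiv> sqrt (R / real (k + 1))"
  shows "(R + beta (\<lambda>_. q) k) / alpha (\<lambda>_. q) k = 2 * q"
proof (cases "R = 0")
  case False
  then have "q > 0" "R = real (k + 1) * q^2"
    using assms by simp_all
  then have "alpha (\<lambda>_. q) k = real (k + 1) * q" "beta (\<lambda>_. q) k = R"
    and "real (k + 1) * q > 0" "R + R = 2 * q * (real (k + 1) * q)"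
    by (simp_all add: alpha_def beta_def power2_eq_square)
  then show ?thesis
    by (simp add: nonzero_divide_eq_eq)
qed (simp add: q_def alpha_def beta_def)

lemma constant_stepsize_optimal:
  assumes "R \<ge> 0" "\<And>t. t \<le> k \<Longrightarrow> \<mu> t > 0"
  shows "2 * sqrt (R / real (k + 1)) \<le> (R + beta \<mu> k) / alpha \<mu> k"
  using two_mul_alpha_le[of "sqrt (R / real (k + 1))" \<mu> k] alpha_pos[of k \<mu>] assms
  by (simp add: pos_le_divide_eq)

lemma Ubound_constant_stepsize_le:
  assumes "R' \<le> R" "R > 0"
  shows "Ubound R' (\<lambda>_. sqrt (R / real (k + 1))) k \<le> 2 * sqrt (R / real (k + 1))"
proof -
  have "alpha (\<lambda>_. sqrt (R / real (k + 1))) k > 0"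
    using assms(2) by (simp add: alpha_pos)
  then have "Ubound R' (\<lambda>_. sqrt (R / real (k + 1))) k \<le> Ubound R (\<lambda>_. sqrt (R / real (k + 1))) k"
    using assms(1) by (simp add: Ubound_def divide_right_mono)
  then show ?thesis
    using constant_stepsize_value[of R k] assms(2) by (simp add: Ubound_eq)
qed

lemma ln_one_plus_ge:
  fixes z :: real
  assumes "z \<ge> 0"
  shows "2 * z / (2 + z) \<le> ln (1 + z)"
proof -
  let ?f = "\<lambda>x::real. ln (1 + x) - 2 * x / (2 + x)"
  have "?f 0 \<le> ?f z"
  proof (rule DERIV_nonneg_imp_nondecreasing[OF assms])
    fix x :: real assume x: "0 \<le> x" "x \<le> z"
    have "DERIV ?f x :> 1 / (1 + x) - (2 * (2 + x) - 2 * x * 1) / ((2 + x) * (2 + x))"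
      using x by (auto intro!: derivative_eq_intros simp: field_simps)
    moreover have "1 / (1 + x) - (2 * (2 + x) - 2 * x * 1) / ((2 + x) * (2 + x))
        = x^2 / ((1 + x) * (2 + x)^2)"
      using x by (simp add: divide_simps power2_eq_square) (simp add: algebra_simps)
    moreover have "x^2 / ((1 + x) * (2 + x)^2) \<ge> 0"
      using x by simp
    ultimately show "\<exists>y. DERIV ?f x :> y \<and> y \<ge> 0" by auto
  qed
  then show ?thesis by simp
qed

text \<open>The midpoint rule for the convex function 1/x on [t + 1/2, t + 3/2].\<close>

lemma inverse_le_ln_diff:
  "1 / (real t + 1) \<le> ln (real t + 3/2) - ln (real t + 1/2)"
proof -
  define z where "z = 2 / (2 * real t + 1)"
  have "2 * z / (2 + z) = 1 / (real t + 1)"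
    unfolding z_def by (simp add: divide_simps) (simp add: algebra_simps)
  moreover have "1 + z = (real t + 3/2) / (real t + 1/2)"
    unfolding z_def by (simp add: field_simps)
  then have "ln (1 + z) = ln (real t + 3/2) - ln (real t + 1/2)"
    by (simp add: ln_div)
  ultimately show ?thesis
    using ln_one_plus_ge[of z] unfolding z_def by simp
qed

lemma harmonic_sum_le_ln: "(\<Sum>t=0..k. 1 / (real t + 1)) \<le> ln (real k + 3/2) + ln 2"
proof (induction k)
  case 0
  have "1 = ln (exp 1::real)" by simp
  also have "\<dots> \<le> ln 3" using exp_le by (subst ln_le_cancel_iff) auto
  also have "\<dots> = ln (3/2) + ln (2::real)" using ln_mult[of "3/2" "2::real"] by simp
  finally show ?case by simp
next
  case (Suc k)
  then show ?case using inverse_le_ln_diff[of "Suc k"] by (simp add: add.commute)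
qed

lemma sqrt_diff_le_inverse_sqrt:
  "2 * (sqrt (real t + 2) - sqrt (real t + 1)) \<le> 1 / sqrt (real t + 1)"
proof -
  let ?a = "sqrt (real t + 2)" and ?b = "sqrt (real t + 1)"
  have pos: "?b > 0" "?a + ?b > 0"
    by (simp_all add: add_pos_pos)
  have "(?a - ?b) * (?a + ?b) = 1"
    by (simp add: algebra_simps)
  then have "?a - ?b = 1 / (?a + ?b)"
    using pos by (simp add: eq_divide_eq)
  moreover have "2 / (?a + ?b) \<le> 1 / ?b"
    using pos by (simp add: divide_simps)
  ultimately show ?thesis by simp
qed

lemma inverse_sqrt_sum_ge: "2 * (sqrt (real k + 2) - 1) \<le> (\<Sum>t=0..k. 1 / sqrt (real t + 1))"
proof (induction k)
  case 0
  show ?case using sqrt_diff_le_inverse_sqrt[of 0] by simp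
next
  case (Suc k)
  show ?case using Suc sqrt_diff_le_inverse_sqrt[of "Suc k"] by (simp add: algebra_simps)
qed

lemma Ubound_inverse_sqrt_stepsize:
  assumes "\<forall>t. lam t = a / sqrt (real t + 1)" "a > 0" "R \<ge> 0"
  shows "Ubound R lam k
    \<le> (R + a^2 * (ln (real k + 3/2) + ln 2)) / (2 * a * (sqrt (real k + 2) - 1))"
proof -
  have lam: "lam = (\<lambda>t. a / sqrt (real t + 1))"
    using assms(1) by auto
  have "alpha lam k = a * (\<Sum>t=0..k. 1 / sqrt (real t + 1))"
    by (simp add: lam alpha_def sum_distrib_left)
  then have "2 * a * (sqrt (real k + 2) - 1) \<le> alpha lam k"
    using inverse_sqrt_sum_ge[of k] assms(2) by (simp add: mult.assoc)
  have "beta lam k = a^2 * (\<Sum>t=0..k. 1 / (real t + 1))"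
    by (simp add: lam beta_def sum_distrib_left power_divide)
  then have "beta lam k \<le> a^2 * (ln (real k + 3/2) + ln 2)"
    using harmonic_sum_le_ln[of k] by (simp add: mult_left_mono)
  moreover note \<open>2 * a * (sqrt (real k + 2) - 1) \<le> alpha lam k\<close>
  moreover have "2 * a * (sqrt (real k + 2) - 1) > 0"
    using assms(2) by simp
  moreover have "R + a^2 * (ln (real k + 3/2) + ln 2) \<ge> 0"
    using assms(3) by simp
  ultimately show ?thesis
    unfolding Ubound_eq by (intro frac_le) simp_all
qed

theorem mainTheorem18:
  fixes n :: nat and E :: "edge list" and c :: vec and lam :: "nat \<Rightarrow> real"
  assumes graph: "simple_graph n E"
    and nonempty: "E \<noteq> []"
    and conn: "connected_graph n E"
    and pos: "\<forall>t. lam t > 0"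
  shows "\<forall>k\<ge>1.
      (Min {EL E lam c t | t. t \<le> k} \<le> (\<Sum>t=0..k. lam t / alpha lam k * EL E lam c t)
       \<and> (\<Sum>t=0..k. lam t / alpha lam k * EL E lam c t) \<le> Ubound (R0 n c) lam k)
    \<and> ((\<forall>t. lam t = lam 0) \<longrightarrow>
         Ubound (R0 n c) lam k = R0 n c / (lam 0 * real (k + 1)) + lam 0)
    \<and> (\<forall>R>0.
         (\<forall>\<mu>::nat \<Rightarrow> real. (\<forall>t\<le>k. \<mu> t > 0) \<longrightarrow>
            (R + beta (\<lambda>t. sqrt (R / real (k + 1))) k) / alpha (\<lambda>t. sqrt (R / real (k + 1))) k
              \<le> (R + beta \<mu> k) / alpha \<mu> k)
       \<and> (R + beta (\<lambda>t. sqrt (R / real (k + 1))) k) / alpha (\<lambda>t. sqrt (R / real (k + 1))) k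
              = 2 * sqrt (R / real (k + 1))
       \<and> (R \<ge> R0 n c \<longrightarrow>
            Ubound (R0 n c) (\<lambda>t. sqrt (R / real (k + 1))) k \<le> 2 * sqrt (R / real (k + 1))))
    \<and> (\<forall>a>0. (\<forall>t. lam t = a / sqrt (real t + 1)) \<longrightarrow>
         Ubound (R0 n c) lam k
           \<le> (R0 n c + a^2 * (ln (real k + 3/2) + ln 2)) / (2 * a * (sqrt (real k + 2) - 1)))"
proof -
  have alpha: "alpha lam k > 0" for k
    using pos by (simp add: alpha_pos)
  have Min_le: "Min {EL E lam c t | t. t \<le> k} \<le> (\<Sum>t=0..k. lam t / alpha lam k * EL E lam c t)" for k
  proof -
    have "{EL E lam c t | t. t \<le> k} = EL E lam c ` {0..k}"
      by auto
    moreover have "(\<Sum>t=0..k. lam t / alpha lam k) = 1"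
      using alpha[of k] by (simp add: alpha_def flip: sum_divide_distrib)
    moreover have "lam t / alpha lam k \<ge> 0" for t
      using pos alpha[of k] by (simp add: less_imp_le)
    ultimately show ?thesis
      by (metis Min_le_convex_combination finite_atLeastAtMost)
  qed
  show ?thesis
    using Min_le weighted_average_EL_le_Ubound[OF graph nonempty] pos R0_nonneg[of n c]
      Ubound_constant_stepsize constant_stepsize_value constant_stepsize_optimal
      Ubound_constant_stepsize_le Ubound_inverse_sqrt_stepsize
    by (auto simp: less_imp_le)
qed

end
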